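(* For the Curie–Weiss model, for every fixed $0\le\beta<1$ and every integer $n\ge2$ there is a constant $C=C(n,\beta)>0$ such that for all $N\ge 2n$ and all pairwise distinct indices $i_1,j_1,\dots,i_n,j_n\in\{1,\dots,N\}$, $$\bigl|\langle\sigma_{i_1}\sigma_{j_1},\sigma_{i_2}\sigma_{j_2},\dots,\sigma_{i_n}\sigma_{j_n}\rangle_c\bigr|\le\frac{C}{N}.$$
   Context: Curie–Weiss model: for $\sigma\in\{-1,1\}^N$, $\mathcal H_N(\sigma)=-\frac1N\sum_{1\le i<j\le N}\sigma_i\sigma_j$, $Z_N(\beta)=\sum_\sigma e^{-\beta\mathcal H_N(\sigma)}$, and $\langle A\rangle=Z_N(\beta)^{-1}\sum_\sigma A(\sigma)e^{-\beta\mathcal H_N(\sigma)}$. The pairwise $n$-point connected correlation is the joint cumulant of $X_k=\sigma_{i_k}\sigma_{j_k}$, $k=1,\dots,n$, under $\langle\cdot\rangle$: $$\langle X_1,\dots,X_n\rangle_c=\sum_{\pi}(-1)^{|\pi|-1}(|\pi|-1)!\prod_{B\in\pi}\Bigl\langle\prod_{k\in B}X_k\Bigr\rangle,$$ the sum running over all set partitions $\pi$ of $\{1,\dots,n\}$ ($|\pi|$ = number of blocks); equivalently $\langle X_1,\dots,X_n\rangle_c=\langle X_1\cdots X_n\rangle$ minus the sum over all nontrivial partitions of products of lower-order connected correlations of the blocks. *)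

theory Defs
  imports "HOL-Analysis.Analysis" "HOL-Library.Disjoint_Sets"
begin

text \<open>Spin configurations on sites 1..N, represented as functions nat => real
  that take values in {-1,1} on {1..N} and are 1 outside (canonical representative).\<close>
definition configs :: "nat \<Rightarrow> (nat \<Rightarrow> real) set" where
  "configs N = {\<sigma>. (\<forall>i\<in>{1..N}. \<sigma> i = 1 \<or> \<sigma> i = -1) \<and> (\<forall>i. i \<notin> {1..N} \<longrightarrow> \<sigma> i = 1)}"

definition cw_H :: "nat \<Rightarrow> (nat \<Rightarrow> real) \<Rightarrow> real" where
  "cw_H N \<sigma> = - (1 / real N) * (\<Sum>(i,j)\<in>{(i,j). 1 \<le> i \<and> i < j \<and> j \<le> N}. \<sigma> i * \<sigma> j)"

definition cw_Z :: "nat \<Rightarrow> real \<Rightarrow> real" where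
  "cw_Z N \<beta> = (\<Sum>\<sigma>\<in>configs N. exp (- \<beta> * cw_H N \<sigma>))"

definition cw_avg :: "nat \<Rightarrow> real \<Rightarrow> ((nat \<Rightarrow> real) \<Rightarrow> real) \<Rightarrow> real" where
  "cw_avg N \<beta> A = (\<Sum>\<sigma>\<in>configs N. A \<sigma> * exp (- \<beta> * cw_H N \<sigma>)) / cw_Z N \<beta>"

text \<open>Joint cumulant of the observables X 0, ..., X (n-1) under the Gibbs measure,
  via the partition (Moebius) formula over all set partitions of {0..<n}.\<close>
definition cw_cumulant :: "nat \<Rightarrow> real \<Rightarrow> nat \<Rightarrow> (nat \<Rightarrow> (nat \<Rightarrow> real) \<Rightarrow> real) \<Rightarrow> real" where
  "cw_cumulant N \<beta> n X =
     (\<Sum>\<pi>\<in>{\<pi>. partition_on {..<n} \<pi>}.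
        (-1) ^ (card \<pi> - 1) * fact (card \<pi> - 1) *
        (\<Prod>B\<in>\<pi>. cw_avg N \<beta> (\<lambda>\<sigma>. \<Prod>k\<in>B. X k \<sigma>)))"

end

theory Submission
  imports Defs
begin

(* With M = sum of all spins, the Gibbs weight is exp (beta (M^2 - N) / (2N)). Pairing each
   configuration with its flip at site a gives the spin-flip identity
     <sigma_a f> = <tanh (beta (M - sigma_a) / N) f>   for f not depending on sigma_a,
   and since |tanh x| <= |x|, summing it over all sites yields <M^2> <= beta <M^2> + beta + N,
   i.e. <M^2> = O(N) for beta < 1.
   For distinct sites a, b and a bounded g depending on neither spin, flipping a and then b gives
     <sigma_a sigma_b g> = <tanh (beta (M - sigma_b) / N) tanh (beta (M - sigma_a - sigma_b) / N) g> + O(1/N),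
   the error coming from removing sigma_b from the field at a (tanh is 1-Lipschitz); the main term
   is O(<M^2> / N^2) = O(1/N). So every moment of a nonempty product of pair observables on
   disjoint sites is O(1/N). Each term of the partition formula for the cumulant contains such a
   moment, its other factors are bounded by 1, hence the cumulant is O(1/N). *)

lemma tanh_real_lipschitz:
  fixes x y :: real
  shows "\<bar>tanh x - tanh y\<bar> \<le> \<bar>x - y\<bar>"
proof -
  have "tanh x - tanh y \<le> x - y" if "y \<le> x" for x y :: real
  proof -
    have deriv: "((\<lambda>t. t - tanh t) has_real_derivative tanh t ^ 2) (at t)" for t :: real
    proof -
      have "cosh t \<noteq> 0" using cosh_real_pos[of t] by simp
      then show ?thesis by (auto intro!: derivative_eq_intros)
    qed
    then have "(\<lambda>t. t - tanh t) y \<le> (\<lambda>t. t - tanh t) x"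
      by (intro DERIV_nonneg_imp_nondecreasing[OF that]) (meson deriv zero_le_power2)
    then show ?thesis by simp
  qed
  from this[of x y] this[of y x] show ?thesis
    by (cases "y \<le> x") auto
qed

lemma abs_tanh_real_le: "\<bar>tanh x\<bar> \<le> \<bar>x :: real\<bar>"
  using tanh_real_lipschitz[of x 0] by simp

lemma tanh_mult_le:
  fixes x c :: real
  assumes "c \<ge> 0"
  shows "tanh (c * x) * x \<le> c * x\<^sup>2"
proof -
  have "tanh (c * x) * x \<le> \<bar>tanh (c * x)\<bar> * \<bar>x\<bar>"
    by (simp add: abs_mult[symmetric])
  also have "\<dots> \<le> \<bar>c * x\<bar> * \<bar>x\<bar>"
    by (intro mult_right_mono abs_tanh_real_le) auto
  also have "\<dots> = c * x\<^sup>2"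
    using assms by (simp add: abs_mult power2_eq_square)
  finally show ?thesis .
qed

lemma abs_tanh_scaled_le:
  fixes \<beta> h n :: real
  assumes "0 \<le> \<beta>" and "\<beta> \<le> 1" and "0 \<le> n"
  shows "\<bar>tanh (\<beta> * h / n)\<bar> \<le> \<bar>h\<bar> / n"
proof -
  have "\<bar>tanh (\<beta> * h / n)\<bar> \<le> \<beta> * (\<bar>h\<bar> / n)"
    using abs_tanh_real_le[of "\<beta> * h / n"] assms by (simp add: abs_mult)
  also have "\<dots> \<le> \<bar>h\<bar> / n"
    using assms mult_left_le_one_le[of "\<bar>h\<bar> / n" \<beta>] by simp
  finally show ?thesis .
qed

lemma abs_diff_mult_diff_le:
  fixes m s t :: real
  assumes "\<bar>s\<bar> \<le> 2" and "\<bar>t\<bar> \<le> 2"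
  shows "\<bar>(m - s) * (m - t)\<bar> \<le> 2 * m\<^sup>2 + 8"
proof -
  have "\<bar>(m - s) * (m - t)\<bar> \<le> (\<bar>m\<bar> + 2) * (\<bar>m\<bar> + 2)"
    unfolding abs_mult using assms by (intro mult_mono) auto
  also have "\<dots> \<le> 2 * m\<^sup>2 + 8"
    using zero_le_power2[of "\<bar>m\<bar> - 2"] by (simp add: power2_eq_square algebra_simps)
  finally show ?thesis .
qed

lemma sum_ordered_pairs_mult:
  fixes f :: "nat \<Rightarrow> 'a :: comm_ring_1"
  shows "2 * (\<Sum>(a, b)\<in>{(a, b). 1 \<le> a \<and> a < b \<and> b \<le> N}. f a * f b)
       = (\<Sum>a=1..N. f a)\<^sup>2 - (\<Sum>a=1..N. f a * f a)"
proof (induction N)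
  case 0
  have "{(a, b). 1 \<le> a \<and> a < b \<and> b \<le> (0::nat)} = {}" by auto
  then show ?case by (simp only:) simp
next
  case (Suc N)
  let ?P = "\<lambda>N. {(a, b). 1 \<le> a \<and> a < b \<and> b \<le> N}"
  have split: "?P (Suc N) = ?P N \<union> (\<lambda>a. (a, Suc N)) ` {1..N}" by auto
  have "finite (?P N)"
    by (rule finite_subset[of _ "{1..N} \<times> {1..N}"]) auto
  then have "(\<Sum>(a, b)\<in>?P (Suc N). f a * f b)
      = (\<Sum>(a, b)\<in>?P N. f a * f b) + (\<Sum>a=1..N. f a) * f (Suc N)"
    unfolding split
    by (subst sum.union_disjoint) (auto simp: sum.reindex inj_on_def sum_distrib_right)
  moreover have "(a + x)\<^sup>2 - (q + x * x) = (a\<^sup>2 - q) + 2 * (a * x)" for a q x :: 'a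
    by (simp add: power2_eq_square algebra_simps)
  ultimately show ?case
    using Suc.IH by (simp add: distrib_left)
qed

lemma finite_configs: "finite (configs N)"
proof -
  have "configs N = {\<sigma>. \<forall>a. (a \<in> {1..N} \<longrightarrow> \<sigma> a \<in> {1, -1}) \<and> (a \<notin> {1..N} \<longrightarrow> \<sigma> a = 1)}"
    unfolding configs_def by auto
  then show ?thesis
    using finite_set_of_finite_funs[of "{1..N}" "{1::real, -1}" 1] by simp
qed

lemma one_in_configs: "(\<lambda>_. 1) \<in> configs N"
  unfolding configs_def by auto

lemma configs_cases: "\<sigma> \<in> configs N \<Longrightarrow> \<sigma> a = 1 \<or> \<sigma> a = -1"
  unfolding configs_def by (cases "a \<in> {1..N}") auto

lemma abs_configs: "\<sigma> \<in> configs N \<Longrightarrow> \<bar>\<sigma> a\<bar> = 1"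
  using configs_cases[of \<sigma> N a] by auto

lemma configs_mult_self: "\<sigma> \<in> configs N \<Longrightarrow> \<sigma> a * \<sigma> a = 1"
  using configs_cases[of \<sigma> N a] by auto

definition magnetization :: "nat \<Rightarrow> (nat \<Rightarrow> real) \<Rightarrow> real" where
  "magnetization N \<sigma> = (\<Sum>a=1..N. \<sigma> a)"

lemma cw_H_magnetization:
  assumes "\<sigma> \<in> configs N"
  shows "cw_H N \<sigma> = (real N - (magnetization N \<sigma>)\<^sup>2) / (2 * real N)"
proof -
  have "(\<Sum>a=1..N. \<sigma> a * \<sigma> a) = real N"
    using configs_mult_self[OF assms] by simp
  then have "(\<Sum>(a, b)\<in>{(a, b). 1 \<le> a \<and> a < b \<and> b \<le> N}. \<sigma> a * \<sigma> b)
      = ((magnetization N \<sigma>)\<^sup>2 - real N) / 2"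
    using sum_ordered_pairs_mult[of \<sigma> N] unfolding magnetization_def by simp
  then show ?thesis
    unfolding cw_H_def by (simp add: divide_simps)
qed

definition flip_spin :: "nat \<Rightarrow> (nat \<Rightarrow> real) \<Rightarrow> nat \<Rightarrow> real" where
  "flip_spin a \<sigma> = \<sigma>(a := - \<sigma> a)"

lemma flip_spin_in_configs: "a \<in> {1..N} \<Longrightarrow> \<sigma> \<in> configs N \<Longrightarrow> flip_spin a \<sigma> \<in> configs N"
  unfolding configs_def flip_spin_def by auto

lemma flip_spin_flip_spin [simp]: "flip_spin a (flip_spin a \<sigma>) = \<sigma>"
  unfolding flip_spin_def by auto

lemma flip_spin_same [simp]: "flip_spin a \<sigma> a = - \<sigma> a"
  unfolding flip_spin_def by simp

lemma flip_spin_other [simp]: "b \<noteq> a \<Longrightarrow> flip_spin a \<sigma> b = \<sigma> b"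
  unfolding flip_spin_def by simp

lemma magnetization_flip_spin:
  assumes "a \<in> {1..N}"
  shows "magnetization N (flip_spin a \<sigma>) = magnetization N \<sigma> - 2 * \<sigma> a"
proof -
  have "magnetization N (flip_spin a \<sigma>) = (\<Sum>b=1..N. \<sigma> b - (if b = a then 2 * \<sigma> a else 0))"
    unfolding magnetization_def flip_spin_def by (intro sum.cong) auto
  also have "\<dots> = magnetization N \<sigma> - 2 * \<sigma> a"
    using assms by (simp add: magnetization_def sum_subtractf)
  finally show ?thesis .
qed

lemma sum_configs_symmetrize:
  fixes F :: "(nat \<Rightarrow> real) \<Rightarrow> real"
  assumes "a \<in> {1..N}"
  shows "2 * (\<Sum>\<sigma>\<in>configs N. F \<sigma>) = (\<Sum>\<sigma>\<in>configs N. F \<sigma> + F (flip_spin a \<sigma>))"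
proof -
  have "(\<Sum>\<sigma>\<in>configs N. F (flip_spin a \<sigma>)) = (\<Sum>\<sigma>\<in>configs N. F \<sigma>)"
    by (rule sum.reindex_bij_witness[of _ "flip_spin a" "flip_spin a"])
      (auto simp: flip_spin_in_configs[OF assms])
  then show ?thesis
    by (simp add: sum.distrib)
qed

lemma cw_Z_pos: "cw_Z N \<beta> > 0"
  unfolding cw_Z_def by (rule sum_pos2[OF finite_configs one_in_configs]) auto

lemma cw_avg_add: "cw_avg N \<beta> (\<lambda>\<sigma>. f \<sigma> + g \<sigma>) = cw_avg N \<beta> f + cw_avg N \<beta> g"
  unfolding cw_avg_def by (simp add: distrib_right sum.distrib add_divide_distrib)

lemma cw_avg_cmult: "cw_avg N \<beta> (\<lambda>\<sigma>. c * f \<sigma>) = c * cw_avg N \<beta> f"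
  unfolding cw_avg_def by (simp add: sum_distrib_left mult.assoc)

lemma cw_avg_sum: "finite I \<Longrightarrow> cw_avg N \<beta> (\<lambda>\<sigma>. \<Sum>i\<in>I. f i \<sigma>) = (\<Sum>i\<in>I. cw_avg N \<beta> (f i))"
  by (induction I rule: finite_induct) (auto simp: cw_avg_add cw_avg_def)

lemma cw_avg_const: "cw_avg N \<beta> (\<lambda>_. c) = c"
  using cw_Z_pos[of N \<beta>] unfolding cw_avg_def cw_Z_def by (simp add: sum_distrib_left[symmetric])

lemma cw_avg_cong: "(\<And>\<sigma>. \<sigma> \<in> configs N \<Longrightarrow> f \<sigma> = g \<sigma>) \<Longrightarrow> cw_avg N \<beta> f = cw_avg N \<beta> g"
  unfolding cw_avg_def by (simp cong: sum.cong)

lemma cw_avg_mono: "(\<And>\<sigma>. \<sigma> \<in> configs N \<Longrightarrow> f \<sigma> \<le> g \<sigma>) \<Longrightarrow> cw_avg N \<beta> f \<le> cw_avg N \<beta> g"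
  unfolding cw_avg_def using cw_Z_pos[of N \<beta>]
  by (intro divide_right_mono sum_mono mult_right_mono) auto

lemma abs_cw_avg_le:
  assumes "\<And>\<sigma>. \<sigma> \<in> configs N \<Longrightarrow> \<bar>f \<sigma>\<bar> \<le> g \<sigma>"
  shows "\<bar>cw_avg N \<beta> f\<bar> \<le> cw_avg N \<beta> g"
proof -
  have "cw_avg N \<beta> f \<le> cw_avg N \<beta> g"
    by (rule cw_avg_mono) (use assms abs_le_D1 in blast)
  moreover have "cw_avg N \<beta> (\<lambda>\<sigma>. - f \<sigma>) \<le> cw_avg N \<beta> g"
    by (rule cw_avg_mono) (use assms abs_le_D2 in blast)
  moreover have "cw_avg N \<beta> (\<lambda>\<sigma>. - f \<sigma>) = - cw_avg N \<beta> f"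
    using cw_avg_cmult[of N \<beta> "-1" f] by simp
  ultimately show ?thesis by linarith
qed

lemma cw_weight_split:
  assumes "\<sigma> \<in> configs N" and "a \<in> {1..N}"
  defines "h \<equiv> magnetization N \<sigma> - \<sigma> a"
  shows "exp (- \<beta> * cw_H N \<sigma>)
       = exp (\<beta> * (h\<^sup>2 + 1 - N) / (2 * real N)) * exp (\<sigma> a * (\<beta> * h / N))"
proof -
  have "(magnetization N \<sigma>)\<^sup>2 = h\<^sup>2 + 2 * \<sigma> a * h + \<sigma> a * \<sigma> a"
    unfolding h_def by (simp add: power2_eq_square algebra_simps)
  then have "(magnetization N \<sigma>)\<^sup>2 = h\<^sup>2 + 2 * \<sigma> a * h + 1"
    using configs_mult_self[OF assms(1)] by simp
  moreover have "real N \<noteq> 0" using assms(2) by simp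
  ultimately have "- \<beta> * cw_H N \<sigma> = \<beta> * (h\<^sup>2 + 1 - N) / (2 * real N) + \<sigma> a * (\<beta> * h / N)"
    unfolding cw_H_magnetization[OF assms(1)] by (simp add: divide_simps) (simp add: algebra_simps)
  then show ?thesis
    by (simp add: exp_add)
qed

lemma spin_exp_diff_eq_tanh:
  fixes s x :: real
  assumes "s = 1 \<or> s = -1"
  shows "s * (exp (s * x) - exp (- (s * x))) = tanh x * (exp (s * x) + exp (- (s * x)))"
proof -
  have "exp x + exp (- x) > 0" by (simp add: add_pos_pos)
  then have "tanh x * (exp x + exp (- x)) = exp x - exp (- x)"
    unfolding tanh_altdef by simp
  with assms show ?thesis by (auto simp: algebra_simps)
qed

lemma cw_avg_spin_flip:
  assumes a: "a \<in> {1..N}"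
    and f_inv: "\<And>\<sigma>. \<sigma> \<in> configs N \<Longrightarrow> f (flip_spin a \<sigma>) = f \<sigma>"
  shows "cw_avg N \<beta> (\<lambda>\<sigma>. \<sigma> a * f \<sigma>)
       = cw_avg N \<beta> (\<lambda>\<sigma>. tanh (\<beta> * (magnetization N \<sigma> - \<sigma> a) / N) * f \<sigma>)"
proof -
  define w where "w \<sigma> = exp (- \<beta> * cw_H N \<sigma>)" for \<sigma>
  define T where "T \<sigma> = tanh (\<beta> * (magnetization N \<sigma> - \<sigma> a) / N)" for \<sigma>
  have field_inv: "magnetization N (flip_spin a \<sigma>) - flip_spin a \<sigma> a = magnetization N \<sigma> - \<sigma> a"
    for \<sigma> using magnetization_flip_spin[OF a] by simp
  have T_inv: "T (flip_spin a \<sigma>) = T \<sigma>" for \<sigma>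
    unfolding T_def field_inv ..
  have pointwise: "\<sigma> a * (w \<sigma> - w (flip_spin a \<sigma>)) = T \<sigma> * (w \<sigma> + w (flip_spin a \<sigma>))"
    if \<sigma>: "\<sigma> \<in> configs N" for \<sigma>
  proof -
    define x where "x = \<beta> * (magnetization N \<sigma> - \<sigma> a) / N"
    define R where "R = exp (\<beta> * ((magnetization N \<sigma> - \<sigma> a)\<^sup>2 + 1 - N) / (2 * real N))"
    have "w \<sigma> = R * exp (\<sigma> a * x)"
      unfolding w_def R_def x_def by (rule cw_weight_split[OF \<sigma> a])
    moreover have "w (flip_spin a \<sigma>) = R * exp (- (\<sigma> a * x))"
      using cw_weight_split[OF flip_spin_in_configs[OF a \<sigma>] a, of \<beta>]
      unfolding w_def R_def x_def field_inv by simp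
    moreover have "\<sigma> a * (exp (\<sigma> a * x) - exp (- (\<sigma> a * x)))
        = T \<sigma> * (exp (\<sigma> a * x) + exp (- (\<sigma> a * x)))"
      unfolding T_def x_def[symmetric] by (rule spin_exp_diff_eq_tanh[OF configs_cases[OF \<sigma>]])
    ultimately show ?thesis
      by (simp add: algebra_simps)
  qed
  have "2 * (\<Sum>\<sigma>\<in>configs N. \<sigma> a * f \<sigma> * w \<sigma>)
      = (\<Sum>\<sigma>\<in>configs N. f \<sigma> * (\<sigma> a * (w \<sigma> - w (flip_spin a \<sigma>))))"
    by (subst sum_configs_symmetrize[OF a]) (intro sum.cong, auto simp: f_inv algebra_simps)
  also have "\<dots> = (\<Sum>\<sigma>\<in>configs N. f \<sigma> * (T \<sigma> * (w \<sigma> + w (flip_spin a \<sigma>))))"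
    by (intro sum.cong) (auto simp: pointwise)
  also have "\<dots> = 2 * (\<Sum>\<sigma>\<in>configs N. T \<sigma> * f \<sigma> * w \<sigma>)"
    by (subst sum_configs_symmetrize[OF a]) (intro sum.cong, auto simp: f_inv T_inv algebra_simps)
  finally show ?thesis
    unfolding cw_avg_def w_def T_def by simp
qed

lemma cw_avg_spin_cavity_le:
  assumes "a \<in> {1..N}" and "0 \<le> \<beta>"
  shows "cw_avg N \<beta> (\<lambda>\<sigma>. \<sigma> a * (magnetization N \<sigma> - \<sigma> a))
       \<le> \<beta> / N * cw_avg N \<beta> (\<lambda>\<sigma>. (magnetization N \<sigma> - \<sigma> a)\<^sup>2)"
proof -
  have "cw_avg N \<beta> (\<lambda>\<sigma>. \<sigma> a * (magnetization N \<sigma> - \<sigma> a))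
      = cw_avg N \<beta> (\<lambda>\<sigma>. tanh (\<beta> * (magnetization N \<sigma> - \<sigma> a) / N) * (magnetization N \<sigma> - \<sigma> a))"
    by (rule cw_avg_spin_flip[OF assms(1)]) (simp add: magnetization_flip_spin[OF assms(1)])
  also have "\<dots> \<le> cw_avg N \<beta> (\<lambda>\<sigma>. \<beta> / N * (magnetization N \<sigma> - \<sigma> a)\<^sup>2)"
    using tanh_mult_le[of "\<beta> / N"] assms(2) by (intro cw_avg_mono) simp
  finally show ?thesis
    by (simp only: cw_avg_cmult)
qed

lemma cw_avg_magnetization_sq_le:
  assumes "N > 0" and "0 \<le> \<beta>" and "\<beta> < 1"
  shows "cw_avg N \<beta> (\<lambda>\<sigma>. (magnetization N \<sigma>)\<^sup>2) \<le> 2 * N / (1 - \<beta>)"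
proof -
  define E where "E = cw_avg N \<beta> (\<lambda>\<sigma>. (magnetization N \<sigma>)\<^sup>2)"
  have spins_times_cavity: "(\<Sum>a=1..N. \<sigma> a * (magnetization N \<sigma> - \<sigma> a)) = (magnetization N \<sigma>)\<^sup>2 - N"
    if "\<sigma> \<in> configs N" for \<sigma>
    using configs_mult_self[OF that]
    by (simp add: right_diff_distrib sum_subtractf sum_distrib_right[symmetric] magnetization_def
        power2_eq_square)
  have cavity_sq: "(\<Sum>a=1..N. (magnetization N \<sigma> - \<sigma> a)\<^sup>2) = (real N - 2) * (magnetization N \<sigma>)\<^sup>2 + N"
    if "\<sigma> \<in> configs N" for \<sigma>
    using configs_mult_self[OF that]
    by (simp add: power2_eq_square algebra_simps sum.distrib sum_subtractf
        sum_distrib_left[symmetric] sum_distrib_right[symmetric] magnetization_def)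
  have "0 \<le> E"
    unfolding E_def using cw_avg_mono[of N "\<lambda>_. 0"] cw_avg_const by (metis zero_le_power2)
  have "cw_avg N \<beta> (\<lambda>\<sigma>. \<Sum>a=1..N. \<sigma> a * (magnetization N \<sigma> - \<sigma> a))
      = cw_avg N \<beta> (\<lambda>\<sigma>. (magnetization N \<sigma>)\<^sup>2 + - real N)"
    by (rule cw_avg_cong) (metis spins_times_cavity diff_conv_add_uminus)
  then have "E - N = cw_avg N \<beta> (\<lambda>\<sigma>. \<Sum>a=1..N. \<sigma> a * (magnetization N \<sigma> - \<sigma> a))"
    unfolding E_def cw_avg_add cw_avg_const by simp
  also have "\<dots> \<le> (\<Sum>a=1..N. \<beta> / N * cw_avg N \<beta> (\<lambda>\<sigma>. (magnetization N \<sigma> - \<sigma> a)\<^sup>2))"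
    unfolding cw_avg_sum[OF finite_atLeastAtMost]
    by (intro sum_mono cw_avg_spin_cavity_le assms(2))
  also have "\<dots> = \<beta> / N * cw_avg N \<beta> (\<lambda>\<sigma>. \<Sum>a=1..N. (magnetization N \<sigma> - \<sigma> a)\<^sup>2)"
    by (simp add: sum_distrib_left cw_avg_sum)
  also have "\<dots> = \<beta> / N * ((real N - 2) * E + N)"
    unfolding E_def by (simp only: cavity_sq cw_avg_add cw_avg_cmult cw_avg_const cong: cw_avg_cong)
  also have "\<dots> = \<beta> * E + \<beta> - 2 * \<beta> * E / N"
    using assms(1) by (simp add: field_simps)
  also have "\<dots> \<le> \<beta> * E + \<beta>"
    using \<open>0 \<le> E\<close> assms(2) by simp
  finally have "(1 - \<beta>) * E \<le> N + \<beta>"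
    by (simp add: algebra_simps)
  also have "\<dots> \<le> 2 * N"
    using assms by simp
  finally show ?thesis
    unfolding E_def using assms(3) by (simp add: field_simps)
qed

lemma cw_avg_tanh_fields_le:
  assumes "0 \<le> \<beta>" and "\<beta> < 1" and "N > 0"
    and g_bound: "\<And>\<sigma>. \<sigma> \<in> configs N \<Longrightarrow> \<bar>g \<sigma>\<bar> \<le> 1"
  shows "\<bar>cw_avg N \<beta> (\<lambda>\<sigma>. tanh (\<beta> * (magnetization N \<sigma> - \<sigma> b) / N)
            * tanh (\<beta> * (magnetization N \<sigma> - \<sigma> a - \<sigma> b) / N) * g \<sigma>)\<bar>
       \<le> (4 / (1 - \<beta>) + 8) / N"
proof -
  let ?M = "magnetization N"
  have N: "real N > 0" using \<open>N > 0\<close> by simp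
  have "\<bar>cw_avg N \<beta> (\<lambda>\<sigma>. tanh (\<beta> * (?M \<sigma> - \<sigma> b) / N) * tanh (\<beta> * (?M \<sigma> - \<sigma> a - \<sigma> b) / N) * g \<sigma>)\<bar>
      \<le> cw_avg N \<beta> (\<lambda>\<sigma>. (2 * (?M \<sigma>)\<^sup>2 + 8) / N\<^sup>2)"
  proof (rule abs_cw_avg_le)
    fix \<sigma> assume \<sigma>: "\<sigma> \<in> configs N"
    have "\<bar>tanh (\<beta> * (?M \<sigma> - \<sigma> b) / N) * tanh (\<beta> * (?M \<sigma> - \<sigma> a - \<sigma> b) / N) * g \<sigma>\<bar>
        \<le> \<bar>tanh (\<beta> * (?M \<sigma> - \<sigma> b) / N)\<bar> * \<bar>tanh (\<beta> * (?M \<sigma> - (\<sigma> a + \<sigma> b)) / N)\<bar>"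
      using g_bound[OF \<sigma>] by (simp add: abs_mult mult_left_le diff_diff_eq)
    also have "\<dots> \<le> (\<bar>?M \<sigma> - \<sigma> b\<bar> / N) * (\<bar>?M \<sigma> - (\<sigma> a + \<sigma> b)\<bar> / N)"
      using assms(1,2) by (intro mult_mono abs_tanh_scaled_le) auto
    also have "\<dots> \<le> (2 * (?M \<sigma>)\<^sup>2 + 8) / N\<^sup>2"
      using abs_diff_mult_diff_le[of "\<sigma> b" "\<sigma> a + \<sigma> b" "?M \<sigma>"] abs_configs[OF \<sigma>] N
      by (simp add: power2_eq_square abs_mult divide_right_mono abs_triangle_ineq[THEN order_trans])
    finally show "\<bar>tanh (\<beta> * (?M \<sigma> - \<sigma> b) / N) * tanh (\<beta> * (?M \<sigma> - \<sigma> a - \<sigma> b) / N) * g \<sigma>\<bar>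
        \<le> (2 * (?M \<sigma>)\<^sup>2 + 8) / N\<^sup>2" .
  qed
  also have "\<dots> = (2 * cw_avg N \<beta> (\<lambda>\<sigma>. (?M \<sigma>)\<^sup>2) + 8) / N\<^sup>2"
    using cw_avg_cmult[of N \<beta> "1 / N\<^sup>2"] cw_avg_add cw_avg_cmult cw_avg_const
    by (simp add: add_divide_distrib)
  also have "\<dots> \<le> (2 * (2 * N / (1 - \<beta>)) + 8 * N) / N\<^sup>2"
    using cw_avg_magnetization_sq_le[OF \<open>N > 0\<close> assms(1,2)] N
    by (intro divide_right_mono add_mono) auto
  also have "\<dots> = (4 / (1 - \<beta>) + 8) / N"
    using N by (simp add: power2_eq_square field_simps)
  finally show ?thesis .
qed

lemma cw_avg_spin_pair_le:
  assumes "0 \<le> \<beta>" and "\<beta> < 1"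
    and a: "a \<in> {1..N}" and b: "b \<in> {1..N}" and "a \<noteq> b"
    and g_inv_a: "\<And>\<sigma>. \<sigma> \<in> configs N \<Longrightarrow> g (flip_spin a \<sigma>) = g \<sigma>"
    and g_inv_b: "\<And>\<sigma>. \<sigma> \<in> configs N \<Longrightarrow> g (flip_spin b \<sigma>) = g \<sigma>"
    and g_bound: "\<And>\<sigma>. \<sigma> \<in> configs N \<Longrightarrow> \<bar>g \<sigma>\<bar> \<le> 1"
  shows "\<bar>cw_avg N \<beta> (\<lambda>\<sigma>. \<sigma> a * \<sigma> b * g \<sigma>)\<bar> \<le> (4 / (1 - \<beta>) + 9) / N"
proof -
  let ?M = "magnetization N"
  define t_a where "t_a \<sigma> = tanh (\<beta> * (?M \<sigma> - \<sigma> a) / N)" for \<sigma>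
  define t_b where "t_b \<sigma> = tanh (\<beta> * (?M \<sigma> - \<sigma> b) / N)" for \<sigma>
  define t_ab where "t_ab \<sigma> = tanh (\<beta> * (?M \<sigma> - \<sigma> a - \<sigma> b) / N)" for \<sigma>
  have N: "real N > 0" using a by simp
  have "cw_avg N \<beta> (\<lambda>\<sigma>. \<sigma> a * \<sigma> b * g \<sigma>) = cw_avg N \<beta> (\<lambda>\<sigma>. t_a \<sigma> * (\<sigma> b * g \<sigma>))"
    unfolding t_a_def mult.assoc
    by (rule cw_avg_spin_flip[OF a]) (use \<open>a \<noteq> b\<close> g_inv_a in simp)
  also have "\<dots> = cw_avg N \<beta> (\<lambda>\<sigma>. (t_a \<sigma> - t_ab \<sigma>) * (\<sigma> b * g \<sigma>))
      + cw_avg N \<beta> (\<lambda>\<sigma>. \<sigma> b * (t_ab \<sigma> * g \<sigma>))"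
    by (subst cw_avg_add[symmetric]) (rule cw_avg_cong, simp add: algebra_simps)
  also have "cw_avg N \<beta> (\<lambda>\<sigma>. \<sigma> b * (t_ab \<sigma> * g \<sigma>)) = cw_avg N \<beta> (\<lambda>\<sigma>. t_b \<sigma> * (t_ab \<sigma> * g \<sigma>))"
    unfolding t_b_def
    by (rule cw_avg_spin_flip[OF b])
      (use \<open>a \<noteq> b\<close> g_inv_b in \<open>simp add: t_ab_def magnetization_flip_spin[OF b]\<close>)
  finally have split: "cw_avg N \<beta> (\<lambda>\<sigma>. \<sigma> a * \<sigma> b * g \<sigma>)
      = cw_avg N \<beta> (\<lambda>\<sigma>. (t_a \<sigma> - t_ab \<sigma>) * (\<sigma> b * g \<sigma>))
      + cw_avg N \<beta> (\<lambda>\<sigma>. t_b \<sigma> * t_ab \<sigma> * g \<sigma>)"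
    by (simp only: mult.assoc)
  have "\<bar>cw_avg N \<beta> (\<lambda>\<sigma>. (t_a \<sigma> - t_ab \<sigma>) * (\<sigma> b * g \<sigma>))\<bar> \<le> cw_avg N \<beta> (\<lambda>_. 1 / N)"
  proof (rule abs_cw_avg_le)
    fix \<sigma> assume \<sigma>: "\<sigma> \<in> configs N"
    have "\<bar>t_a \<sigma> - t_ab \<sigma>\<bar> \<le> \<bar>\<beta> * (?M \<sigma> - \<sigma> a) / N - \<beta> * (?M \<sigma> - \<sigma> a - \<sigma> b) / N\<bar>"
      unfolding t_a_def t_ab_def by (rule tanh_real_lipschitz)
    also have "\<dots> = \<beta> / N"
      using abs_configs[OF \<sigma>, of b] \<open>0 \<le> \<beta>\<close>
      by (simp add: diff_divide_distrib[symmetric] abs_mult algebra_simps)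
    also have "\<dots> \<le> 1 / N"
      using \<open>\<beta> < 1\<close> N by (simp add: divide_right_mono)
    finally show "\<bar>(t_a \<sigma> - t_ab \<sigma>) * (\<sigma> b * g \<sigma>)\<bar> \<le> 1 / N"
      using g_bound[OF \<sigma>] abs_configs[OF \<sigma>, of b] N
      by (simp add: abs_mult mult_le_one mult_le_cancel_left1 order_trans[OF mult_right_le_one_le])
  qed
  moreover have "\<bar>cw_avg N \<beta> (\<lambda>\<sigma>. t_b \<sigma> * t_ab \<sigma> * g \<sigma>)\<bar> \<le> (4 / (1 - \<beta>) + 8) / N"
    unfolding t_b_def t_ab_def using N by (intro cw_avg_tanh_fields_le assms(1,2) g_bound) auto
  ultimately show ?thesis
    unfolding split cw_avg_const by (simp add: add_divide_distrib)
qed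

lemma inj_on_case_sum_distinct:
  assumes inj: "inj_on (\<lambda>p. case p of Inl k \<Rightarrow> i k | Inr k \<Rightarrow> j k) (A <+> A)"
    and "k \<in> A" and "k' \<in> A"
  shows "i k \<noteq> j k'" and "k \<noteq> k' \<Longrightarrow> i k \<noteq> i k'" and "k \<noteq> k' \<Longrightarrow> j k \<noteq> j k'"
  using inj_onD[OF inj, of "Inl k" "Inr k'"] inj_onD[OF inj, of "Inl k" "Inl k'"]
    inj_onD[OF inj, of "Inr k" "Inr k'"] assms(2,3)
  by auto

lemma cw_avg_prod_spin_pairs_le:
  fixes i j :: "nat \<Rightarrow> nat"
  assumes "0 \<le> \<beta>" and "\<beta> < 1"
    and sites: "\<forall>k<n. i k \<in> {1..N} \<and> j k \<in> {1..N}"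
    and inj: "inj_on (\<lambda>p. case p of Inl k \<Rightarrow> i k | Inr k \<Rightarrow> j k) ({..<n} <+> {..<n})"
    and "B \<subseteq> {..<n}" and "B \<noteq> {}"
  shows "\<bar>cw_avg N \<beta> (\<lambda>\<sigma>. \<Prod>k\<in>B. \<sigma> (i k) * \<sigma> (j k))\<bar> \<le> (4 / (1 - \<beta>) + 9) / N"
proof -
  obtain k0 where k0: "k0 \<in> B" using \<open>B \<noteq> {}\<close> by blast
  have "finite B" using \<open>B \<subseteq> {..<n}\<close> by (rule finite_subset) simp
  have k0_n: "k0 < n" using k0 \<open>B \<subseteq> {..<n}\<close> by blast
  define g where "g \<sigma> = (\<Prod>k\<in>B - {k0}. \<sigma> (i k) * \<sigma> (j k))" for \<sigma> :: "nat \<Rightarrow> real"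
  have other_sites: "c \<noteq> i k \<and> c \<noteq> j k" if "k \<in> B - {k0}" and "c \<in> {i k0, j k0}" for k c
  proof -
    have "k < n" "k \<noteq> k0" using that(1) \<open>B \<subseteq> {..<n}\<close> by auto
    then show ?thesis
      using inj_on_case_sum_distinct[OF inj, of k k0] inj_on_case_sum_distinct(1)[OF inj, of k0 k]
        k0_n that(2) by auto
  qed
  have g_inv: "g (flip_spin c \<sigma>) = g \<sigma>" if "c \<in> {i k0, j k0}" for c \<sigma>
    unfolding g_def
  proof (rule prod.cong[OF refl])
    fix k assume "k \<in> B - {k0}"
    with other_sites[OF this that] show "flip_spin c \<sigma> (i k) * flip_spin c \<sigma> (j k) = \<sigma> (i k) * \<sigma> (j k)"
      by simp
  qed
  have g_bound: "\<bar>g \<sigma>\<bar> \<le> 1" if "\<sigma> \<in> configs N" for \<sigma>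
    unfolding g_def abs_prod by (simp add: abs_mult abs_configs[OF that])
  have "(\<lambda>\<sigma>. \<Prod>k\<in>B. \<sigma> (i k) * \<sigma> (j k)) = (\<lambda>\<sigma>. \<sigma> (i k0) * \<sigma> (j k0) * g \<sigma>)"
    unfolding g_def using prod.remove[OF \<open>finite B\<close> k0] by auto
  moreover have "\<bar>cw_avg N \<beta> (\<lambda>\<sigma>. \<sigma> (i k0) * \<sigma> (j k0) * g \<sigma>)\<bar> \<le> (4 / (1 - \<beta>) + 9) / N"
  proof (rule cw_avg_spin_pair_le[OF assms(1,2)])
    show "i k0 \<in> {1..N}" "j k0 \<in> {1..N}" using sites k0_n by auto
    show "i k0 \<noteq> j k0" using inj_on_case_sum_distinct(1)[OF inj, of k0 k0] k0_n by simp
    show "g (flip_spin (i k0) \<sigma>) = g \<sigma>" "g (flip_spin (j k0) \<sigma>) = g \<sigma>" for \<sigma>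
      by (simp_all add: g_inv)
    show "\<bar>g \<sigma>\<bar> \<le> 1" if "\<sigma> \<in> configs N" for \<sigma>
      using g_bound[OF that] .
  qed
  ultimately show ?thesis by simp
qed

lemma abs_cw_cumulant_le:
  fixes X :: "nat \<Rightarrow> (nat \<Rightarrow> real) \<Rightarrow> real"
  assumes "n > 0"
    and X_bound: "\<And>k \<sigma>. k < n \<Longrightarrow> \<sigma> \<in> configs N \<Longrightarrow> \<bar>X k \<sigma>\<bar> \<le> 1"
    and block_bound: "\<And>B. B \<subseteq> {..<n} \<Longrightarrow> B \<noteq> {} \<Longrightarrow> \<bar>cw_avg N \<beta> (\<lambda>\<sigma>. \<Prod>k\<in>B. X k \<sigma>)\<bar> \<le> \<epsilon>"
  shows "\<bar>cw_cumulant N \<beta> n X\<bar> \<le> (\<Sum>\<pi> | partition_on {..<n} \<pi>. fact (card \<pi> - 1)) * \<epsilon>"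
proof -
  define m where "m B = cw_avg N \<beta> (\<lambda>\<sigma>. \<Prod>k\<in>B. X k \<sigma>)" for B
  have m_le_1: "\<bar>m B\<bar> \<le> 1" if "B \<subseteq> {..<n}" for B
  proof -
    have "\<bar>m B\<bar> \<le> cw_avg N \<beta> (\<lambda>_. 1)"
      unfolding m_def using that X_bound
      by (intro abs_cw_avg_le) (auto simp: abs_prod intro!: prod_le_1)
    then show ?thesis by (simp add: cw_avg_const)
  qed
  have prod_le: "\<bar>\<Prod>B\<in>\<pi>. m B\<bar> \<le> \<epsilon>" if \<pi>: "partition_on {..<n} \<pi>" for \<pi>
  proof -
    have "finite \<pi>" using finite_elements[OF _ \<pi>] by simp
    obtain B0 where B0: "B0 \<in> \<pi>"
      using partition_onD1[OF \<pi>] \<open>n > 0\<close> by fastforce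
    have blocks: "B \<subseteq> {..<n}" "B \<noteq> {}" if "B \<in> \<pi>" for B
      using partition_onD1[OF \<pi>] partition_onD3[OF \<pi>] that by blast+
    have "\<bar>\<Prod>B\<in>\<pi>. m B\<bar> = \<bar>m B0\<bar> * (\<Prod>B\<in>\<pi> - {B0}. \<bar>m B\<bar>)"
      unfolding abs_prod using prod.remove[OF \<open>finite \<pi>\<close> B0] by simp
    also have "\<dots> \<le> \<epsilon> * 1"
      using block_bound[OF blocks[OF B0]] m_le_1 blocks unfolding m_def
      by (intro mult_mono prod_le_1) (auto simp: prod_nonneg)
    finally show ?thesis by simp
  qed
  have "\<bar>cw_cumulant N \<beta> n X\<bar>
      \<le> (\<Sum>\<pi> | partition_on {..<n} \<pi>. \<bar>(-1) ^ (card \<pi> - 1) * fact (card \<pi> - 1) * (\<Prod>B\<in>\<pi>. m B)\<bar>)"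
    unfolding cw_cumulant_def m_def by (rule sum_abs)
  also have "\<dots> \<le> (\<Sum>\<pi> | partition_on {..<n} \<pi>. fact (card \<pi> - 1) * \<epsilon>)"
    using prod_le by (intro sum_mono) (simp add: abs_mult mult_left_mono)
  finally show ?thesis
    by (simp add: sum_distrib_right)
qed

theorem proposition2p6:
  fixes \<beta> :: real and n :: nat
  assumes "0 \<le> \<beta>" and "\<beta> < 1" and "n \<ge> 2"
  shows "\<exists>C > 0. \<forall>N (i :: nat \<Rightarrow> nat) (j :: nat \<Rightarrow> nat).
           N \<ge> 2 * n \<longrightarrow>
           (\<forall>k<n. i k \<in> {1..N} \<and> j k \<in> {1..N}) \<longrightarrow>
           inj_on (\<lambda>p. case p of Inl k \<Rightarrow> i k | Inr k \<Rightarrow> j k) ({..<n} <+> {..<n}) \<longrightarrow>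
           \<bar>cw_cumulant N \<beta> n (\<lambda>k \<sigma>. \<sigma> (i k) * \<sigma> (j k))\<bar> \<le> C / real N"
proof -
  define P where "P = (\<Sum>\<pi> | partition_on {..<n} \<pi>. fact (card \<pi> - 1) :: real)"
  define K where "K = 4 / (1 - \<beta>) + 9"
  have "partition_on {..<n} {{..<n}}"
    using \<open>n \<ge> 2\<close> by (intro partition_on_space) (simp add: lessThan_empty_iff)
  then have "P > 0"
    unfolding P_def by (intro sum_pos2[where i = "{{..<n}}"] finitely_many_partition_on) auto
  moreover have "K > 0"
    unfolding K_def using \<open>\<beta> < 1\<close> by (simp add: add_pos_pos)
  ultimately show ?thesis
  proof (intro exI[of _ "P * K"] conjI allI impI)
    fix N i j
    assume "2 * n \<le> N"
      and sites: "\<forall>k<n. i k \<in> {1..N} \<and> j k \<in> {1..N}"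
      and inj: "inj_on (\<lambda>p. case p of Inl k \<Rightarrow> i k | Inr k \<Rightarrow> j k) ({..<n} <+> {..<n})"
    have "\<bar>cw_cumulant N \<beta> n (\<lambda>k \<sigma>. \<sigma> (i k) * \<sigma> (j k))\<bar> \<le> P * (K / N)"
      unfolding P_def
    proof (rule abs_cw_cumulant_le)
      show "n > 0" using \<open>n \<ge> 2\<close> by simp
      show "\<bar>\<sigma> (i k) * \<sigma> (j k)\<bar> \<le> 1" if "k < n" and "\<sigma> \<in> configs N" for k \<sigma>
        using that by (simp add: abs_mult abs_configs)
      show "\<bar>cw_avg N \<beta> (\<lambda>\<sigma>. \<Prod>k\<in>B. \<sigma> (i k) * \<sigma> (j k))\<bar> \<le> K / N"
        if "B \<subseteq> {..<n}" and "B \<noteq> {}" for B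
        unfolding K_def by (rule cw_avg_prod_spin_pairs_le[OF assms(1,2) sites inj that])
    qed
    then show "\<bar>cw_cumulant N \<beta> n (\<lambda>k \<sigma>. \<sigma> (i k) * \<sigma> (j k))\<bar> \<le> P * K / N"
      by simp
  qed (simp add: mult_pos_pos)
qed

end
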